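(* Let $0<q<1$. Then $$\int_0^\infty A_q^2(u^{-1})\,w_{SW}(u;q)\,du=(q;q)_\infty .$$
   Context: Notation: $(a;q)_k:=\prod_{j=0}^{k-1}(1-aq^j)$ (with $(a;q)_0:=1$), $(q;q)_\infty:=\prod_{j=1}^{\infty}(1-q^j)$. Ramanujan's function is $A_q(z):=\sum_{k=0}^{\infty}\frac{q^{k^2}}{(q;q)_k}(-z)^k$. The Stieltjes–Wigert weight is $w_{SW}(x;q):=\sqrt{\frac{-1}{2\pi\log q}}\exp\left\{\frac{1}{2\log q}\left[\log\left(\frac{x}{\sqrt q}\right)\right]^2\right\}$ for $x>0$. *)

theory Defs
  imports "HOL-Analysis.Analysis"
begin

definition qpoch :: "real \<Rightarrow> real \<Rightarrow> nat \<Rightarrow> real" where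
  "qpoch a q k = (\<Prod>j<k. 1 - a * q ^ j)"

definition qpoch_inf :: "real \<Rightarrow> real" where
  "qpoch_inf q = (\<Prod>j. 1 - q ^ (Suc j))"

definition ramanujanA :: "real \<Rightarrow> real \<Rightarrow> real" where
  "ramanujanA q z = (\<Sum>k. q ^ (k^2) / qpoch q q k * (- z) ^ k)"

definition w_SW :: "real \<Rightarrow> real \<Rightarrow> real" where
  "w_SW x q = sqrt (-1 / (2 * pi * ln q)) * exp (1 / (2 * ln q) * (ln (x / sqrt q))^2)"

end

theory Submission
  imports Defs "HOL-Probability.Distributions"
begin

(* Under u = exp t the Stieltjes--Wigert weight becomes the normal density with mean -ln q / 2
   and variance -ln q, whose exponential moments give
   \<integral> e^(-n t) = q^(-(n choose 2)).  Expanding A_q(e^(-t)) = \<Sum>k b_k e^(-k t) with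
   b_k = (-1)^k q^(k^2) / (q;q)_k, the double series \<Sum>j \<Sum>k b_j b_k e^(-(j+k) t) converges
   absolutely in L^1, so the integral is \<Sum>j \<Sum>k b_j b_k q^(-((j+k) choose 2)).  The inner
   sum is b_j q^(-(j choose 2)) E(q^(1-j)) with Euler's series
   E(x) = \<Sum>k (-1)^k q^(k choose 2) x^k / (q;q)_k = (x;q)_\<infinity>, which vanishes at
   x = q^(-m) and equals (q;q)_\<infinity> at x = q; only j = 0 survives. *)

section \<open>Integration of series and the substitution u = exp t\<close>

lemma
  fixes f :: "nat \<Rightarrow> 'a \<Rightarrow> 'b::{banach, second_countable_topology}"
  assumes f: "\<And>k. has_bochner_integral M (f k) (I k)"
    and summable_pointwise: "AE x in M. summable (\<lambda>k. norm (f k x))"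
    and bound: "\<And>k. (\<integral>x. norm (f k x) \<partial>M) \<le> B k" and "summable B"
  shows has_bochner_integral_suminf: "has_bochner_integral M (\<lambda>x. \<Sum>k. f k x) (\<Sum>k. I k)"
    and integral_norm_suminf_le: "(\<integral>x. norm (\<Sum>k. f k x) \<partial>M) \<le> (\<Sum>k. B k)"
proof -
  have int: "integrable M (f k)" for k
    by (rule integrable.intros[OF f])
  have summable_int: "summable (\<lambda>k. \<integral>x. norm (f k x) \<partial>M)"
    using bound by (intro summable_comparison_test'[OF \<open>summable B\<close>]) simp
  show "has_bochner_integral M (\<lambda>x. \<Sum>k. f k x) (\<Sum>k. I k)"
    using integrable_suminf[OF int summable_pointwise summable_int]
      integral_suminf[OF int summable_pointwise summable_int] has_bochner_integral_integral_eq[OF f]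
    by (simp add: has_bochner_integral_iff)
  have norm_int: "integrable M (\<lambda>x. norm (f k x))" for k
    using int by (rule integrable_norm)
  have "(\<integral>x. norm (\<Sum>k. f k x) \<partial>M) \<le> (\<integral>x. (\<Sum>k. norm (f k x)) \<partial>M)"
  proof (rule integral_mono_AE)
    show "integrable M (\<lambda>x. norm (\<Sum>k. f k x))"
      by (rule integrable_norm[OF integrable_suminf[OF int summable_pointwise summable_int]])
    show "integrable M (\<lambda>x. \<Sum>k. norm (f k x))"
      using summable_pointwise summable_int by (intro integrable_suminf[OF norm_int]) auto
    show "AE x in M. norm (\<Sum>k. f k x) \<le> (\<Sum>k. norm (f k x))"
      using summable_pointwise by (rule eventually_mono) (rule summable_norm)
  qed
  also have "\<dots> = (\<Sum>k. \<integral>x. norm (f k x) \<partial>M)"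
    using summable_pointwise summable_int by (intro integral_suminf[OF norm_int]) auto
  also have "\<dots> \<le> (\<Sum>k. B k)"
    by (intro suminf_le bound summable_int \<open>summable B\<close>)
  finally show "(\<integral>x. norm (\<Sum>k. f k x) \<partial>M) \<le> (\<Sum>k. B k)" .
qed

lemma has_integral_exp_change_of_variables:
  fixes f :: "real \<Rightarrow> real"
  assumes "has_bochner_integral lborel (\<lambda>t. exp t * f (exp t)) I"
  shows "(f has_integral I) {0<..}"
proof -
  let ?g = "\<lambda>t. \<bar>exp t\<bar> * f (exp t)"
  have int: "integrable lborel ?g" and eq: "integral\<^sup>L lborel ?g = I"
    using assms by (simp_all add: has_bochner_integral_iff)
  have "?g absolutely_integrable_on UNIV"
    using integrable_completion[OF borel_measurable_integrable[OF int]] int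
    by (simp add: set_integrable_def)
  moreover have "integral UNIV ?g = I"
    using integral_lborel[OF int] eq by simp
  moreover have "exp ` (UNIV :: real set) = {0<..}"
    by (auto simp: image_iff) (metis exp_ln)
  ultimately have abs: "f absolutely_integrable_on {0<..}" and integral_eq: "integral {0<..} f = I"
    using has_absolute_integral_change_of_variables_1'[of UNIV exp exp f I]
    by (auto simp: inj_on_def)
  show ?thesis
    using integrable_integral[OF set_lebesgue_integral_eq_integral(1)[OF abs]] by (simp add: integral_eq)
qed

section \<open>Moments of the Stieltjes--Wigert weight\<close>

lemma exp_mult_normal_density:
  fixes a \<mu> \<sigma> t :: real
  assumes "0 < \<sigma>"
  shows "exp (a * t) * normal_density \<mu> \<sigma> t
    = exp (a * \<mu> + a\<^sup>2 * \<sigma>\<^sup>2 / 2) * normal_density (\<mu> + a * \<sigma>\<^sup>2) \<sigma> t"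
proof -
  have "a * t + - (t - \<mu>)\<^sup>2 / (2 * \<sigma>\<^sup>2)
      = a * \<mu> + a\<^sup>2 * \<sigma>\<^sup>2 / 2 + - (t - (\<mu> + a * \<sigma>\<^sup>2))\<^sup>2 / (2 * \<sigma>\<^sup>2)"
    using assms by (simp add: field_simps power2_eq_square)
  then have "exp (a * t) * exp (- (t - \<mu>)\<^sup>2 / (2 * \<sigma>\<^sup>2))
      = exp (a * \<mu> + a\<^sup>2 * \<sigma>\<^sup>2 / 2)
        * exp (- (t - (\<mu> + a * \<sigma>\<^sup>2))\<^sup>2 / (2 * \<sigma>\<^sup>2))"
    by (simp only: mult_exp_exp)
  then show ?thesis
    by (simp add: normal_density_def mult_ac)
qed

lemma has_bochner_integral_exp_mult_normal_density:
  fixes a \<mu> \<sigma> :: real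
  assumes "0 < \<sigma>"
  shows "has_bochner_integral lborel (\<lambda>t. exp (a * t) * normal_density \<mu> \<sigma> t)
           (exp (a * \<mu> + a\<^sup>2 * \<sigma>\<^sup>2 / 2))"
proof -
  have "has_bochner_integral lborel (normal_density (\<mu> + a * \<sigma>\<^sup>2) \<sigma>) 1"
    using assms by (simp add: has_bochner_integral_iff)
  then show ?thesis
    unfolding exp_mult_normal_density[OF assms]
    using has_bochner_integral_mult_right[of "exp (a * \<mu> + a\<^sup>2 * \<sigma>\<^sup>2 / 2)" lborel _ 1] by simp
qed

definition sw_log_density :: "real \<Rightarrow> real \<Rightarrow> real" where
  "sw_log_density q = normal_density (- ln q / 2) (sqrt (- ln q))"

lemma exp_mult_w_SW_exp:
  fixes q t :: real
  assumes "0 < q" "q < 1"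
  shows "exp t * w_SW (exp t) q = sw_log_density q t"
proof -
  define L where "L = ln q"
  have L: "L < 0" using assms by (simp add: L_def)
  have "ln (exp t / sqrt q) = t - L / 2"
    using assms by (simp add: ln_div ln_sqrt L_def)
  moreover have "t + 1 / (2 * L) * (t - L / 2)\<^sup>2 = - (t - - L / 2)\<^sup>2 / (2 * (sqrt (- L))\<^sup>2)"
    using L by (simp add: field_simps power2_eq_square)
  moreover have "- 1 / (2 * pi * L) = 1 / (2 * pi * (sqrt (- L))\<^sup>2)"
    using L by simp
  then have "sqrt (- 1 / (2 * pi * L)) = 1 / sqrt (2 * pi * (sqrt (- L))\<^sup>2)"
    by (simp only: real_sqrt_divide real_sqrt_one)
  ultimately show ?thesis
    unfolding w_SW_def sw_log_density_def normal_density_def L_def[symmetric]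
    by (simp add: mult_exp_exp mult.left_commute)
qed

lemma choose_two_Suc: "Suc n choose 2 = (n choose 2) + n"
  by (simp add: numeral_2_eq_2)

lemma choose_two_add: "(j + k) choose 2 = (j choose 2) + j * k + (k choose 2)"
  by (induction k) (simp_all add: choose_two_Suc)

lemma power2_eq_choose_two: "k\<^sup>2 = 2 * (k choose 2) + k"
  by (induction k) (simp_all add: choose_two_Suc power2_eq_square)

lemma has_bochner_integral_sw_log_density_moment:
  fixes q :: real
  assumes "0 < q" "q < 1"
  shows "has_bochner_integral lborel (\<lambda>t. exp (- t) ^ n * sw_log_density q t) (1 / q ^ (n choose 2))"
proof -
  have \<sigma>: "0 < sqrt (- ln q)" "(sqrt (- ln q))\<^sup>2 = - ln q"
    using assms by simp_all
  have "real n * real n = 2 * real (n choose 2) + real n"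
    using arg_cong[OF power2_eq_choose_two[of n], of real] by (simp add: power2_eq_square)
  then have "- real n * (- ln q / 2) + (- real n)\<^sup>2 * (sqrt (- ln q))\<^sup>2 / 2
      = - (ln q * real (n choose 2))"
    unfolding \<sigma>(2) by (simp add: power2_eq_square field_simps)
  moreover have "q ^ (n choose 2) = exp (ln q * real (n choose 2))"
    using assms by (metis exp_ln exp_of_nat_mult mult.commute)
  moreover have "exp (- t) ^ n = exp (- real n * t)" for t
    by (simp add: exp_of_nat_mult[symmetric])
  ultimately show ?thesis
    using has_bochner_integral_exp_mult_normal_density[OF \<sigma>(1), of "- real n" "- ln q / 2"]
    by (simp add: sw_log_density_def exp_minus inverse_eq_divide)
qed

section \<open>The q-Pochhammer symbol\<close>

lemma qpoch_Suc [simp]: "qpoch a q (Suc k) = qpoch a q k * (1 - a * q ^ k)"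
  by (simp add: qpoch_def)

lemma
  fixes q :: real
  assumes "0 < q" "q < 1"
  shows qpoch_has_prod: "(\<lambda>j. 1 - q ^ Suc j) has_prod qpoch_inf q"
    and qpoch_inf_pos: "0 < qpoch_inf q"
proof -
  have "convergent_prod (\<lambda>j. 1 + - (q ^ Suc j))"
  proof (rule summable_imp_convergent_prod_real)
    show "summable (\<lambda>j. \<bar>- (q ^ Suc j)\<bar>)"
      using assms by (simp add: summable_geometric)
    show "- (q ^ Suc j) \<noteq> - 1" for j
      using power_Suc_less_one[OF assms, of j] by linarith
  qed
  then show "(\<lambda>j. 1 - q ^ Suc j) has_prod qpoch_inf q" and "0 < qpoch_inf q"
    using assms power_Suc_less_one[OF assms]
    by (auto simp: qpoch_inf_def intro!: less_0_prodinf)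
qed

lemma qpoch_inf_le_qpoch:
  fixes q :: real
  assumes "0 < q" "q < 1"
  shows "qpoch_inf q \<le> qpoch q q k"
proof -
  have "prodinf (\<lambda>j. 1 - q ^ Suc j) \<le> (\<Prod>j<k. 1 - q ^ Suc j)"
    using power_Suc_less_one[OF assms] assms
    by (intro prod_ge_prodinf[OF qpoch_has_prod[OF assms]]) (auto simp: less_imp_le)
  then show ?thesis
    by (simp add: qpoch_inf_def qpoch_def)
qed

lemma qpoch_pos:
  fixes q :: real
  assumes "0 < q" "q < 1"
  shows "0 < qpoch q q k"
  using qpoch_inf_pos[OF assms] qpoch_inf_le_qpoch[OF assms] by (rule less_le_trans)

lemma qpoch_tendsto_qpoch_inf:
  fixes q :: real
  assumes "0 < q" "q < 1"
  shows "(\<lambda>k. qpoch q q k) \<longlonglongrightarrow> qpoch_inf q"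
  using has_prod_imp_tendsto'[OF qpoch_has_prod[OF assms]] by (simp add: qpoch_def)

section \<open>Euler's identity\<close>

lemma summable_power_choose_two:
  fixes q x :: real
  assumes "\<bar>q\<bar> < 1"
  shows "summable (\<lambda>k. q ^ (k choose 2) * x ^ k)"
proof -
  have "(\<lambda>n. \<bar>q\<bar> ^ n * \<bar>x\<bar>) \<longlonglongrightarrow> 0 * \<bar>x\<bar>"
    using assms by (intro tendsto_intros LIMSEQ_power_zero) auto
  then have "eventually (\<lambda>n. \<bar>q\<bar> ^ n * \<bar>x\<bar> < 1 / 2) sequentially"
    by (intro order_tendstoD) auto
  then obtain N where N: "\<And>n. n \<ge> N \<Longrightarrow> \<bar>q\<bar> ^ n * \<bar>x\<bar> < 1 / 2"
    by (auto simp: eventually_sequentially)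
  show ?thesis
  proof (rule summable_ratio_test[of "1 / 2" N])
    fix n assume "N \<le> n"
    have "norm (q ^ (Suc n choose 2) * x ^ Suc n)
        = (\<bar>q\<bar> ^ n * \<bar>x\<bar>) * norm (q ^ (n choose 2) * x ^ n)"
      by (simp add: choose_two_Suc power_add abs_mult power_abs)
    also have "\<dots> \<le> 1 / 2 * norm (q ^ (n choose 2) * x ^ n)"
      using N[OF \<open>N \<le> n\<close>] by (intro mult_right_mono) auto
    finally show "norm (q ^ (Suc n choose 2) * x ^ Suc n) \<le> 1 / 2 * norm (q ^ (n choose 2) * x ^ n)" .
  qed simp
qed

lemma summable_norm_powser_choose_two_bound:
  fixes c :: "nat \<Rightarrow> real"
  assumes "\<bar>q\<bar> < 1" and "\<And>k. \<bar>c k\<bar> \<le> C * \<bar>q\<bar> ^ (k choose 2)"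
  shows "summable (\<lambda>k. norm (c k * x ^ k))"
proof (rule summable_comparison_test')
  show "summable (\<lambda>k. C * (\<bar>q\<bar> ^ (k choose 2) * \<bar>x\<bar> ^ k))"
    using assms(1) by (intro summable_mult summable_power_choose_two) simp
  show "norm (norm (c k * x ^ k)) \<le> C * (\<bar>q\<bar> ^ (k choose 2) * \<bar>x\<bar> ^ k)" for k
    using mult_right_mono[OF assms(2)[of k], of "\<bar>x\<bar> ^ k"] by (simp add: abs_mult power_abs)
qed

definition euler_coeff :: "real \<Rightarrow> nat \<Rightarrow> real" where
  "euler_coeff q k = (- 1) ^ k * q ^ (k choose 2) / qpoch q q k"

definition euler_series :: "real \<Rightarrow> real \<Rightarrow> real" where
  "euler_series q x = (\<Sum>k. euler_coeff q k * x ^ k)"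

lemma summable_euler_coeff:
  fixes q :: real
  assumes "0 < q" "q < 1"
  shows "summable (\<lambda>k. norm (euler_coeff q k * x ^ k))"
proof (rule summable_norm_powser_choose_two_bound)
  show "\<bar>euler_coeff q k\<bar> \<le> 1 / qpoch_inf q * \<bar>q\<bar> ^ (k choose 2)" for k
    using assms qpoch_pos[OF assms] qpoch_inf_pos[OF assms] qpoch_inf_le_qpoch[OF assms, of k]
    by (simp add: euler_coeff_def abs_mult frac_le)
qed (use assms in simp)

lemma euler_coeff_Suc:
  fixes q :: real
  assumes "0 < q" "q < 1"
  shows "euler_coeff q (Suc k) * (1 - q ^ Suc k) = - (euler_coeff q k * q ^ k)"
proof -
  have "q * q ^ k < 1" using power_Suc_less_one[OF assms] by simp
  then show ?thesis
    using qpoch_pos[OF assms, of k] by (simp add: euler_coeff_def choose_two_Suc power_add field_simps)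
qed

lemma euler_series_functional_eq:
  fixes q :: real
  assumes "0 < q" "q < 1"
  shows "euler_series q x = (1 - x) * euler_series q (q * x)"
proof -
  let ?d = "\<lambda>k. euler_coeff q k * x ^ k - euler_coeff q k * (q * x) ^ k"
  have summable: "summable (\<lambda>k. euler_coeff q k * y ^ k)" for y
    using summable_euler_coeff[OF assms] by (rule summable_norm_cancel)
  have "euler_series q x - euler_series q (q * x) = (\<Sum>k. ?d k)"
    unfolding euler_series_def by (intro suminf_diff summable)
  also have "\<dots> = (\<Sum>k. ?d (Suc k))"
    using suminf_split_head[OF summable_diff[OF summable summable]] by simp
  also have "\<dots> = (\<Sum>k. - x * (euler_coeff q k * (q * x) ^ k))"
  proof (rule suminf_cong)
    fix k
    have "?d (Suc k) = euler_coeff q (Suc k) * (1 - q ^ Suc k) * x ^ Suc k"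
      by (simp add: algebra_simps power_mult_distrib)
    also have "\<dots> = - (euler_coeff q k * q ^ k) * x ^ Suc k"
      by (simp only: euler_coeff_Suc[OF assms])
    finally show "?d (Suc k) = - x * (euler_coeff q k * (q * x) ^ k)"
      by (simp add: power_mult_distrib)
  qed
  also have "\<dots> = - x * euler_series q (q * x)"
    unfolding euler_series_def by (intro suminf_mult summable)
  finally show ?thesis
    by (simp add: algebra_simps)
qed

lemma euler_series_eq_qpoch_mult:
  fixes q :: real
  assumes "0 < q" "q < 1"
  shows "euler_series q x = qpoch x q N * euler_series q (q ^ N * x)"
proof (induction N)
  case (Suc N)
  have "euler_series q (q ^ N * x) = (1 - x * q ^ N) * euler_series q (q ^ Suc N * x)"
    using euler_series_functional_eq[OF assms, of "q ^ N * x"] by (simp add: ac_simps)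
  then show ?case
    using Suc.IH by (simp add: mult.assoc)
qed (simp add: qpoch_def)

theorem qpoch_tendsto_euler_series:
  fixes q :: real
  assumes "0 < q" "q < 1"
  shows "(\<lambda>N. qpoch x q N) \<longlonglongrightarrow> euler_series q x"
proof -
  have "isCont (euler_series q) 0"
    unfolding euler_series_def[abs_def]
    by (rule isCont_powser[of _ 1])
       (use summable_norm_cancel[OF summable_euler_coeff[OF assms, of 1]] in simp_all)
  moreover have "(\<lambda>N. q ^ N * x) \<longlonglongrightarrow> 0"
    using assms by (intro tendsto_mult_left_zero LIMSEQ_power_zero) auto
  ultimately have "(\<lambda>N. euler_series q (q ^ N * x)) \<longlonglongrightarrow> euler_series q 0"
    by (rule isCont_tendsto_compose)
  moreover have "euler_series q 0 = 1"
    unfolding euler_series_def using powser_zero[of "euler_coeff q"]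
    by (simp add: euler_coeff_def qpoch_def binomial_eq_0)
  ultimately have lim: "(\<lambda>N. euler_series q (q ^ N * x)) \<longlonglongrightarrow> 1"
    by simp
  then have "eventually (\<lambda>N. euler_series q (q ^ N * x) \<noteq> 0) sequentially"
    by (rule tendsto_imp_eventually_ne) simp
  then have "eventually (\<lambda>N. euler_series q x / euler_series q (q ^ N * x) = qpoch x q N) sequentially"
    by eventually_elim (metis euler_series_eq_qpoch_mult[OF assms] nonzero_mult_div_cancel_right)
  moreover have "(\<lambda>N. euler_series q x / euler_series q (q ^ N * x)) \<longlonglongrightarrow> euler_series q x / 1"
    by (intro tendsto_divide tendsto_const lim) simp
  ultimately show ?thesis
    by (simp add: tendsto_cong)
qed

lemma euler_series_q:
  fixes q :: real
  assumes "0 < q" "q < 1"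
  shows "euler_series q q = qpoch_inf q"
  using qpoch_tendsto_euler_series[OF assms] qpoch_tendsto_qpoch_inf[OF assms] by (rule LIMSEQ_unique)

lemma euler_series_inverse_power:
  fixes q :: real
  assumes "0 < q" "q < 1"
  shows "euler_series q (1 / q ^ m) = 0"
proof -
  have "qpoch (1 / q ^ m) q N = 0" if "m < N" for N
    using that assms unfolding qpoch_def by (intro prod_zero) auto
  then have "eventually (\<lambda>N. 0 = qpoch (1 / q ^ m) q N) sequentially"
    by (auto simp: eventually_sequentially intro: exI[of _ "Suc m"])
  then have "(\<lambda>N. qpoch (1 / q ^ m) q N) \<longlonglongrightarrow> 0"
    by (rule Lim_transform_eventually[OF tendsto_const])
  then show ?thesis
    using qpoch_tendsto_euler_series[OF assms] LIMSEQ_unique by blast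
qed

section \<open>Termwise integration of the squared Ramanujan function\<close>

definition ramanujan_coeff :: "real \<Rightarrow> nat \<Rightarrow> real" where
  "ramanujan_coeff q k = (- 1) ^ k * q ^ k\<^sup>2 / qpoch q q k"

lemma ramanujanA_eq_suminf: "ramanujanA q x = (\<Sum>k. ramanujan_coeff q k * x ^ k)"
  unfolding ramanujanA_def ramanujan_coeff_def by (intro suminf_cong) (subst power_minus, simp)

lemma abs_ramanujan_coeff_le:
  fixes q :: real
  assumes "0 < q" "q < 1"
  shows "\<bar>ramanujan_coeff q k\<bar> \<le> q ^ k\<^sup>2 / qpoch_inf q"
  using assms qpoch_pos[OF assms] qpoch_inf_pos[OF assms] qpoch_inf_le_qpoch[OF assms, of k]
  by (simp add: ramanujan_coeff_def abs_mult frac_le)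

lemma summable_ramanujan_coeff:
  fixes q :: real
  assumes "0 < q" "q < 1"
  shows "summable (\<lambda>k. norm (ramanujan_coeff q k * x ^ k))"
proof (rule summable_norm_powser_choose_two_bound)
  show "\<bar>ramanujan_coeff q k\<bar> \<le> 1 / qpoch_inf q * \<bar>q\<bar> ^ (k choose 2)" for k
  proof -
    have "q ^ k\<^sup>2 \<le> q ^ (k choose 2)"
      using assms by (intro power_decreasing) (auto simp: power2_eq_choose_two)
    then show ?thesis
      using abs_ramanujan_coeff_le[OF assms, of k] qpoch_inf_pos[OF assms] assms
      by (simp add: divide_right_mono order_trans)
  qed
qed (use assms in simp)

lemma ramanujan_coeff_mult_eq_euler_coeff:
  fixes q :: real
  assumes "0 < q" "q < 1"
  shows "ramanujan_coeff q j * ramanujan_coeff q k / q ^ ((j + k) choose 2)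
    = ramanujan_coeff q j / q ^ (j choose 2) * (euler_coeff q k * (q / q ^ j) ^ k)"
proof -
  have "q ^ k\<^sup>2 = q ^ (k choose 2) * q ^ (k choose 2) * q ^ k"
    by (simp add: power2_eq_choose_two power_add mult_2)
  moreover have "q ^ ((j + k) choose 2) = q ^ (j choose 2) * q ^ (j * k) * q ^ (k choose 2)"
    by (simp add: choose_two_add power_add)
  moreover have "(q / q ^ j) ^ k = q ^ k / q ^ (j * k)"
    by (simp add: power_divide power_mult)
  ultimately show ?thesis
    unfolding ramanujan_coeff_def euler_coeff_def
    using assms qpoch_pos[OF assms, of j] qpoch_pos[OF assms, of k] by (simp add: field_simps)
qed

lemma sums_ramanujan_coeff_moments:
  fixes q :: real
  assumes "0 < q" "q < 1"
  shows "(\<lambda>k. ramanujan_coeff q j * ramanujan_coeff q k / q ^ ((j + k) choose 2))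
           sums (if j = 0 then qpoch_inf q else 0)"
proof -
  have "(\<lambda>k. euler_coeff q k * (q / q ^ j) ^ k) sums euler_series q (q / q ^ j)"
    unfolding euler_series_def
    by (intro summable_sums summable_norm_cancel[OF summable_euler_coeff[OF assms]])
  from sums_mult[OF this, of "ramanujan_coeff q j / q ^ (j choose 2)"]
  have "(\<lambda>k. ramanujan_coeff q j * ramanujan_coeff q k / q ^ ((j + k) choose 2))
      sums (ramanujan_coeff q j / q ^ (j choose 2) * euler_series q (q / q ^ j))"
    by (simp add: ramanujan_coeff_mult_eq_euler_coeff[OF assms])
  moreover have "ramanujan_coeff q j / q ^ (j choose 2) * euler_series q (q / q ^ j)
      = (if j = 0 then qpoch_inf q else 0)"
  proof (cases j)
    case 0
    then show ?thesis
      by (simp add: euler_series_q[OF assms] ramanujan_coeff_def qpoch_def binomial_eq_0)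
  next
    case (Suc m)
    then have "q / q ^ j = 1 / q ^ m" using assms by simp
    then show ?thesis
      using euler_series_inverse_power[OF assms, of m] Suc by simp
  qed
  ultimately show ?thesis
    by simp
qed

lemma abs_ramanujan_coeff_moment_le:
  fixes q :: real
  assumes "0 < q" "q < 1"
  shows "\<bar>ramanujan_coeff q j * ramanujan_coeff q k\<bar> / q ^ ((j + k) choose 2)
    \<le> sqrt q ^ j * sqrt q ^ k / (qpoch_inf q)\<^sup>2"
proof -
  define s where "s = sqrt q"
  have s: "0 < s" "s < 1" "q = s\<^sup>2" using assms by (auto simp: s_def)
  have "0 \<le> (int j - int k)\<^sup>2"
    by simp
  then have "int ((j + k)\<^sup>2) \<le> int (2 * (j\<^sup>2 + k\<^sup>2))"
    by (simp add: power2_eq_square algebra_simps)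
  then have "(j + k)\<^sup>2 \<le> 2 * (j\<^sup>2 + k\<^sup>2)"
    by (simp only: of_nat_le_iff)
  then have "2 * ((j + k) choose 2) + (j + k) \<le> 2 * (j\<^sup>2 + k\<^sup>2)"
    by (simp add: power2_eq_choose_two[of "j + k"])
  then have "s ^ (2 * (j\<^sup>2 + k\<^sup>2)) \<le> s ^ (2 * ((j + k) choose 2) + (j + k))"
    using s by (intro power_decreasing) auto
  then have "q ^ j\<^sup>2 * q ^ k\<^sup>2 \<le> q ^ ((j + k) choose 2) * (s ^ j * s ^ k)"
    unfolding s(3) by (simp add: power_add power_mult[symmetric])
  then have num: "q ^ j\<^sup>2 * q ^ k\<^sup>2 / q ^ ((j + k) choose 2) \<le> s ^ j * s ^ k"
    using assms by (simp add: divide_le_eq mult.commute)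
  have "\<bar>ramanujan_coeff q j * ramanujan_coeff q k\<bar> / q ^ ((j + k) choose 2)
      \<le> (q ^ j\<^sup>2 / qpoch_inf q) * (q ^ k\<^sup>2 / qpoch_inf q) / q ^ ((j + k) choose 2)"
    unfolding abs_mult using abs_ramanujan_coeff_le[OF assms] assms qpoch_inf_pos[OF assms]
    by (intro divide_right_mono mult_mono) auto
  also have "\<dots> = (q ^ j\<^sup>2 * q ^ k\<^sup>2 / q ^ ((j + k) choose 2)) / (qpoch_inf q)\<^sup>2"
    by (simp add: power2_eq_square)
  also have "\<dots> \<le> s ^ j * s ^ k / (qpoch_inf q)\<^sup>2"
    using num by (rule divide_right_mono) simp
  finally show ?thesis
    by (simp add: s_def)
qed

lemma sw_log_density_nonneg: "0 \<le> sw_log_density q t"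
  by (simp add: sw_log_density_def)

lemma
  fixes q :: real and j :: nat
  assumes q: "0 < q" "q < 1"
  defines "g \<equiv>
    \<lambda>t. ramanujan_coeff q j * exp (- t) ^ j * ramanujanA q (exp (- t)) * sw_log_density q t"
  shows has_bochner_integral_ramanujan_row: "has_bochner_integral lborel g (if j = 0 then qpoch_inf q else 0)"
    and integral_norm_ramanujan_row_le:
      "(\<integral>t. norm (g t) \<partial>lborel) \<le> sqrt q ^ j / (1 - sqrt q) / (qpoch_inf q)\<^sup>2"
proof -
  define c where "c k = ramanujan_coeff q j * ramanujan_coeff q k" for k
  define f where "f k = (\<lambda>t. c k * (exp (- t) ^ (j + k) * sw_log_density q t))" for k
  define B where "B k = sqrt q ^ j * sqrt q ^ k / (qpoch_inf q)\<^sup>2" for k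
  have f_integral: "has_bochner_integral lborel (f k) (c k / q ^ ((j + k) choose 2))" for k
    using has_bochner_integral_mult_right[OF has_bochner_integral_sw_log_density_moment[OF q]]
    by (simp add: f_def)
  have norm_f_integral:
    "has_bochner_integral lborel (\<lambda>t. norm (f k t)) (\<bar>c k\<bar> / q ^ ((j + k) choose 2))" for k
    using has_bochner_integral_mult_right[OF has_bochner_integral_sw_log_density_moment[OF q]]
      sw_log_density_nonneg
    by (simp add: f_def abs_mult)
  have integral_norm_f: "(\<integral>t. norm (f k t) \<partial>lborel) \<le> B k" for k
    using has_bochner_integral_integral_eq[OF norm_f_integral] abs_ramanujan_coeff_moment_le[OF q]
    by (simp add: c_def B_def)
  have summable_B: "summable B"
    unfolding B_def using q by (intro summable_divide summable_mult summable_geometric) auto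
  have "norm (f k t) = \<bar>ramanujan_coeff q j * exp (- t) ^ j * sw_log_density q t\<bar>
      * norm (ramanujan_coeff q k * exp (- t) ^ k)" for k t
    using sw_log_density_nonneg by (simp add: f_def c_def abs_mult power_add)
  then have summable_norm_f: "summable (\<lambda>k. norm (f k t))" for t
    using summable_mult[OF summable_ramanujan_coeff[OF q]] by simp
  have sum_f: "(\<Sum>k. f k t) = g t" for t
  proof -
    have "(\<Sum>k. f k t) = (\<Sum>k. ramanujan_coeff q j * exp (- t) ^ j * sw_log_density q t
        * (ramanujan_coeff q k * exp (- t) ^ k))"
      by (simp add: f_def c_def power_add mult_ac)
    also have "\<dots> = ramanujan_coeff q j * exp (- t) ^ j * sw_log_density q t * ramanujanA q (exp (- t))"
      unfolding ramanujanA_eq_suminf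
      by (intro suminf_mult summable_norm_cancel[OF summable_ramanujan_coeff[OF q]])
    finally show ?thesis
      by (simp add: g_def mult_ac)
  qed
  note termwise = has_bochner_integral_suminf[OF f_integral _ integral_norm_f summable_B]
    integral_norm_suminf_le[OF f_integral _ integral_norm_f summable_B]
  show "has_bochner_integral lborel g (if j = 0 then qpoch_inf q else 0)"
    using termwise(1) summable_norm_f sums_unique[OF sums_ramanujan_coeff_moments[OF q, of j]]
    by (simp add: sum_f c_def)
  show "(\<integral>t. norm (g t) \<partial>lborel) \<le> sqrt q ^ j / (1 - sqrt q) / (qpoch_inf q)\<^sup>2"
    using termwise(2) summable_norm_f q
    by (simp add: sum_f B_def suminf_divide suminf_mult summable_geometric suminf_geometric)
qed

lemma has_bochner_integral_ramanujanA_sq: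
  fixes q :: real
  assumes "0 < q" "q < 1"
  shows "has_bochner_integral lborel (\<lambda>t. (ramanujanA q (exp (- t)))\<^sup>2 * sw_log_density q t)
           (qpoch_inf q)"
proof -
  define g where
    "g j = (\<lambda>t. ramanujan_coeff q j * exp (- t) ^ j * ramanujanA q (exp (- t)) * sw_log_density q t)"
    for j
  define B where "B j = sqrt q ^ j / (1 - sqrt q) / (qpoch_inf q)\<^sup>2" for j
  have g_integral: "has_bochner_integral lborel (g j) (if j = 0 then qpoch_inf q else 0)" for j
    unfolding g_def by (rule has_bochner_integral_ramanujan_row[OF assms])
  have integral_norm_g: "(\<integral>t. norm (g j t) \<partial>lborel) \<le> B j" for j
    unfolding g_def B_def by (rule integral_norm_ramanujan_row_le[OF assms])
  have summable_B: "summable B"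
    unfolding B_def using assms by (intro summable_divide summable_geometric) auto
  have "norm (g j t) = \<bar>ramanujanA q (exp (- t)) * sw_log_density q t\<bar>
      * norm (ramanujan_coeff q j * exp (- t) ^ j)" for j t
    by (simp add: g_def abs_mult)
  then have summable_norm_g: "summable (\<lambda>j. norm (g j t))" for t
    using summable_mult[OF summable_ramanujan_coeff[OF assms]] by simp
  have sum_g: "(\<Sum>j. g j t) = (ramanujanA q (exp (- t)))\<^sup>2 * sw_log_density q t" for t
  proof -
    have "(\<Sum>j. g j t)
        = (\<Sum>j. ramanujan_coeff q j * exp (- t) ^ j * (ramanujanA q (exp (- t)) * sw_log_density q t))"
      by (simp add: g_def mult.assoc)
    also have "\<dots>
        = (\<Sum>j. ramanujan_coeff q j * exp (- t) ^ j) * (ramanujanA q (exp (- t)) * sw_log_density q t)"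
      by (intro suminf_mult2[symmetric] summable_norm_cancel[OF summable_ramanujan_coeff[OF assms]])
    finally show ?thesis
      by (simp add: ramanujanA_eq_suminf[symmetric] power2_eq_square)
  qed
  have "(\<Sum>j. if j = 0 then qpoch_inf q else 0) = qpoch_inf q"
    using sums_single[of 0 "\<lambda>_. qpoch_inf q"] by (simp add: sums_unique[symmetric])
  then show ?thesis
    using has_bochner_integral_suminf[OF g_integral _ integral_norm_g summable_B] summable_norm_g
    by (simp add: sum_g)
qed

theorem mainTheorem4:
  fixes q :: real
  assumes "0 < q" and "q < 1"
  shows "((\<lambda>u. (ramanujanA q (1 / u))^2 * w_SW u q) has_integral qpoch_inf q) {0<..}"
proof (rule has_integral_exp_change_of_variables)
  have "exp t * ((ramanujanA q (1 / exp t))\<^sup>2 * w_SW (exp t) q)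
      = (ramanujanA q (exp (- t)))\<^sup>2 * sw_log_density q t" for t
    using exp_mult_w_SW_exp[OF assms, of t] by (simp add: exp_minus inverse_eq_divide)
  then show "has_bochner_integral lborel
      (\<lambda>t. exp t * ((ramanujanA q (1 / exp t))\<^sup>2 * w_SW (exp t) q)) (qpoch_inf q)"
    using has_bochner_integral_ramanujanA_sq[OF assms] by simp
qed

end
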